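(* Let $\rho_1,\dots,\rho_T,\sigma_1,\dots,\sigma_T$ be $d$-dimensional quantum states, $\varrho=\rho_1\otimes\cdots\otimes\rho_T\otimes\sigma_1\otimes\cdots\otimes\sigma_T$, $\rho_{\mathrm{avg}}=\frac1T\sum_t\rho_t$, $\sigma_{\mathrm{avg}}=\frac1T\sum_t\sigma_t$, $\mu=\mathrm{Tr}[(\rho_{\mathrm{avg}}-\sigma_{\mathrm{avg}})^2]$. Define on $(\mathbb C^d)^{\otimes 2T}$ $$Z=\frac1{T^2}\sum_{1\le i\ne j\le T}S^A_{ij}+\frac1{T^2}\sum_{1\le i\ne j\le T}S^B_{ij}-\frac2{T^2}\sum_{1\le i,j\le T}S^{AB}_{ij},$$ where $S^A_{ij}$ swaps tensor components $i$ and $j$, $S^B_{ij}$ swaps components $T+i$ and $T+j$, and $S^{AB}_{ij}$ swaps components $i$ and $T+j$. Then $|\mathbb E_\varrho[Z]-\mu|\le\frac2T$, and there is a universal constant $K$ such that $\mathrm{Var}_\varrho[Z]\le\frac{16}T\mu+\frac K{T^2}$.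
   Context: $\mathbb E_\varrho[Y]=\mathrm{Tr}[\varrho Y]$ and $\mathrm{Var}_\varrho[Y]=\mathbb E_\varrho[Y^2]-\mathbb E_\varrho[Y]^2$. *)

theory Defs
  imports "Jordan_Normal_Form.Matrix" "HOL-Combinatorics.Transposition"
begin

(* Complex_Order is imported via Jordan_Normal_Form: for complex numbers
   0 \<le> z means z is real and nonnegative. *)

definition psd_mat :: "nat \<Rightarrow> complex mat \<Rightarrow> bool" where
  "psd_mat d A \<longleftrightarrow> A \<in> carrier_mat d d \<and>
     (\<forall>v :: nat \<Rightarrow> complex. 0 \<le> (\<Sum>i<d. \<Sum>j<d. cnj (v i) * A $$ (i,j) * v j))"

definition mat_trace :: "complex mat \<Rightarrow> complex" where
  "mat_trace A = (\<Sum>i<dim_row A. A $$ (i,i))"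

definition density_mat :: "nat \<Rightarrow> complex mat \<Rightarrow> bool" where
  "density_mat d A \<longleftrightarrow> psd_mat d A \<and> mat_trace A = 1"

text \<open>Operators on (C^d)^{\<otimes> n}, written in the computational product basis
 |x_0 ... x_{n-1}>, indexed by tuples x : {0..<n} \<rightarrow> {0..<d}.\<close>
type_synonym tensor_op = "(nat \<Rightarrow> nat) \<Rightarrow> (nat \<Rightarrow> nat) \<Rightarrow> complex"

definition tuples :: "nat \<Rightarrow> nat \<Rightarrow> (nat \<Rightarrow> nat) set" where
  "tuples d n = PiE {..<n} (\<lambda>_. {..<d})"

definition tensor_prod :: "nat \<Rightarrow> (nat \<Rightarrow> complex mat) \<Rightarrow> tensor_op" where
  "tensor_prod n A = (\<lambda>x y. \<Prod>k<n. A k $$ (x k, y k))"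

definition swap_op :: "nat \<Rightarrow> nat \<Rightarrow> tensor_op" where
  "swap_op a b = (\<lambda>x y. if x = y \<circ> transpose a b then 1 else 0)"

definition op_mult :: "nat \<Rightarrow> nat \<Rightarrow> tensor_op \<Rightarrow> tensor_op \<Rightarrow> tensor_op" where
  "op_mult d n X Y = (\<lambda>x z. \<Sum>y\<in>tuples d n. X x y * Y y z)"

definition op_trace :: "nat \<Rightarrow> nat \<Rightarrow> tensor_op \<Rightarrow> complex" where
  "op_trace d n X = (\<Sum>x\<in>tuples d n. X x x)"

definition expect :: "nat \<Rightarrow> nat \<Rightarrow> tensor_op \<Rightarrow> tensor_op \<Rightarrow> complex" where
  "expect d n \<rho> Y = op_trace d n (op_mult d n \<rho> Y)"

definition variance_op :: "nat \<Rightarrow> nat \<Rightarrow> tensor_op \<Rightarrow> tensor_op \<Rightarrow> complex" where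
  "variance_op d n \<rho> Y = expect d n \<rho> (op_mult d n Y Y) - (expect d n \<rho> Y)^2"

text \<open>The 2T-fold state rho_0 \<otimes> ... \<otimes> rho_{T-1} \<otimes> sigma_0 \<otimes> ... \<otimes> sigma_{T-1}
 (0-based indices).\<close>
definition joint_state :: "nat \<Rightarrow> (nat \<Rightarrow> complex mat) \<Rightarrow> (nat \<Rightarrow> complex mat) \<Rightarrow> tensor_op" where
  "joint_state T \<rho> \<sigma> = tensor_prod (2*T) (\<lambda>k. if k < T then \<rho> k else \<sigma> (k - T))"

definition Z_op :: "nat \<Rightarrow> tensor_op" where
  "Z_op T = (\<lambda>x y.
      (1 / of_nat T ^ 2) * (\<Sum>i<T. \<Sum>j<T. if i \<noteq> j then swap_op i j x y else 0)
    + (1 / of_nat T ^ 2) * (\<Sum>i<T. \<Sum>j<T. if i \<noteq> j then swap_op (T+i) (T+j) x y else 0)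
    - (2 / of_nat T ^ 2) * (\<Sum>i<T. \<Sum>j<T. swap_op i (T+j) x y))"

definition avg_state :: "nat \<Rightarrow> nat \<Rightarrow> (nat \<Rightarrow> complex mat) \<Rightarrow> complex mat" where
  "avg_state d T \<rho> = mat d d (\<lambda>(i,j). (\<Sum>t<T. \<rho> t $$ (i,j)) / of_nat T)"

definition mu_val :: "nat \<Rightarrow> nat \<Rightarrow> (nat \<Rightarrow> complex mat) \<Rightarrow> (nat \<Rightarrow> complex mat) \<Rightarrow> complex" where
  "mu_val d T \<rho> \<sigma> = (let D = avg_state d T \<rho> - avg_state d T \<sigma> in mat_trace (D * D))"

end

(*
  The expectation of a permutation operator in a product state factorises over the cycles of
  the permutation: factors it does not move contribute their trace 1, a transposition (a b)
  contributes Tr[A_a A_b], a 3-cycle (a b e) contributes Tr[A_a A_b A_e], and two disjoint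
  transpositions contribute the product of their traces.

  Index the 2T factors by k < 2T and put s_k = 1 on the rho-half, s_k = -1 on the sigma-half.
  Then Z = T^-2 sum_{a,b} c_ab S_ab with c_ab = s_a s_b - [a = b], and T D = sum_k s_k A_k for
  D = rho_avg - sigma_avg, so that E[Z] = mu - T^-2 sum_a Tr[A_a^2]; since 0 <= Tr[A^2] <= 1
  for a state, the bias is at most 2/T.

  In Var[Z] = T^-4 sum c_ab c_ce Cov(S_ab, S_ce) the covariance of swaps on disjoint pairs
  vanishes. Pairs sharing both indices contribute O(T^2). Pairs sharing one index a produce
  3-cycles, and their signed sum over the two free indices is T^2 Tr[A_a D D] up to O(T)
  corrections; by Cauchy-Schwarz |Tr[A D D]| <= ||D||_F^2 = mu, which gives the 8 mu / T term.
*)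
theory Submission
  imports Defs "HOL-Combinatorics.Permutations" "HOL-Analysis.Convex"
begin

lemma sum_PiE_insert:
  assumes "a \<notin> S"
  shows "(\<Sum>u\<in>PiE (insert a S) B. f u) = (\<Sum>v\<in>B a. \<Sum>u\<in>PiE S B. f (u(a := v)))"
proof -
  have "(\<Sum>u\<in>PiE (insert a S) B. f u) = (\<Sum>(v, u)\<in>B a \<times> PiE S B. f (u(a := v)))"
    unfolding PiE_insert_eq using assms by (subst sum.reindex) (auto simp: inj_combinator intro!: sum.cong)
  then show ?thesis by (simp add: sum.cartesian_product)
qed

lemma sum_remove_two:
  assumes "finite I" "a \<in> I" "b \<in> I" "a \<noteq> b"
  shows "(\<Sum>x\<in>I. f x) = f a + f b + (\<Sum>x\<in>I - {a, b}. f x)"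
  using assms by (simp add: sum.subset_diff[of "{a, b}" I] add.commute)

lemma double_sum_swap:
  "(\<Sum>x\<in>X. \<Sum>y\<in>Y. \<Sum>a\<in>A. \<Sum>b\<in>B. f x y a b) = (\<Sum>a\<in>A. \<Sum>b\<in>B. \<Sum>x\<in>X. \<Sum>y\<in>Y. f x y a b)"
  by (simp only: sum.swap[where A = Y and B = A] sum.swap[where A = Y and B = B]
      sum.swap[where A = X and B = A] sum.swap[where A = X and B = B])

lemma sum_lessThan_double:
  fixes f :: "nat \<Rightarrow> 'a::comm_monoid_add"
  shows "(\<Sum>k<2 * T. f k) = (\<Sum>i<T. f i) + (\<Sum>i<T. f (T + i))"
proof -
  have "{..<2 * T} = {0..<T} \<union> {0 + T..<T + T}" by auto
  then have "(\<Sum>k<2 * T. f k) = (\<Sum>k\<in>{0..<T}. f k) + (\<Sum>k\<in>{0 + T..<T + T}. f k)"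
    by (simp add: sum.union_disjoint)
  also have "(\<Sum>k\<in>{0 + T..<T + T}. f k) = (\<Sum>i\<in>{0..<T}. f (i + T))"
    by (rule sum.shift_bounds_nat_ivl)
  finally show ?thesis by (simp add: atLeast0LessThan add.commute)
qed

lemma norm_sum_mult_sq_le:
  fixes f g :: "'i \<Rightarrow> 'a::real_normed_div_algebra"
  shows "(norm (\<Sum>i\<in>I. f i * g i))\<^sup>2 \<le> (\<Sum>i\<in>I. (norm (f i))\<^sup>2) * (\<Sum>i\<in>I. (norm (g i))\<^sup>2)"
proof -
  have "norm (\<Sum>i\<in>I. f i * g i) \<le> (\<Sum>i\<in>I. norm (f i) * norm (g i))"
    using norm_sum[of "\<lambda>i. f i * g i" I] by (simp add: norm_mult)
  then have "(norm (\<Sum>i\<in>I. f i * g i))\<^sup>2 \<le> (\<Sum>i\<in>I. norm (f i) * norm (g i))\<^sup>2"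
    by (intro power_mono) auto
  also have "\<dots> \<le> (\<Sum>i\<in>I. (norm (f i))\<^sup>2) * (\<Sum>i\<in>I. (norm (g i))\<^sup>2)"
    by (rule Cauchy_Schwarz_ineq_sum)
  finally show ?thesis .
qed

lemma norm_double_sum_le:
  fixes f :: "'i \<Rightarrow> 'j \<Rightarrow> 'a::real_normed_vector"
  assumes "\<And>a b. a \<in> A \<Longrightarrow> b \<in> B \<Longrightarrow> norm (f a b) \<le> M"
  shows "norm (\<Sum>a\<in>A. \<Sum>b\<in>B. f a b) \<le> real (card A) * real (card B) * M"
proof -
  have "norm (\<Sum>a\<in>A. \<Sum>b\<in>B. f a b) \<le> (\<Sum>a\<in>A. \<Sum>b\<in>B. M)"
    using assms by (intro sum_norm_le) (simp add: sum_norm_le)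
  then show ?thesis by simp
qed

lemma norm_square_mult_diff_square_le:
  fixes z u g :: "'a::real_normed_field"
  assumes "norm z \<le> 1" "norm u \<le> 1" "norm g \<le> 1"
  shows "norm (z * z * (u - g\<^sup>2)) \<le> 2"
proof -
  have "norm (u - g\<^sup>2) \<le> norm u + (norm g)\<^sup>2"
    using norm_triangle_ineq4[of u "g\<^sup>2"] by (simp add: norm_power)
  also have "\<dots> \<le> 2"
    using assms power_le_one[of "norm g" 2] by simp
  finally have "norm z * norm z * norm (u - g\<^sup>2) \<le> 1 * 1 * 2"
    using assms by (intro mult_mono) auto
  then show ?thesis by (simp add: norm_mult)
qed

lemma sum_pairs_against_pair:
  fixes f :: "'i \<Rightarrow> 'i \<Rightarrow> 'i \<Rightarrow> 'i \<Rightarrow> 'a::comm_semiring_1"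
  assumes I: "finite I" and ab: "a \<in> I" "b \<in> I"
    and diag: "\<And>a c e. f a a c e = 0" "\<And>a b c. f a b c c = 0"
    and disjoint: "\<And>a b c e. a \<in> I \<Longrightarrow> b \<in> I \<Longrightarrow> c \<in> I \<Longrightarrow> e \<in> I \<Longrightarrow> {a, b} \<inter> {c, e} = {} \<Longrightarrow> f a b c e = 0"
    and sym: "\<And>a b c e. f a b e c = f a b c e"
  shows "(\<Sum>c\<in>I. \<Sum>e\<in>I. f a b c e)
    = 2 * f a b a b + 2 * (\<Sum>e\<in>I - {a, b}. f a b a e) + 2 * (\<Sum>e\<in>I - {a, b}. f a b b e)"
proof (cases "a = b")
  case True
  then show ?thesis using diag(1) by simp
next
  case False
  have row_a: "(\<Sum>e\<in>I. f a b a e) = f a b a b + (\<Sum>e\<in>I - {a, b}. f a b a e)"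
    using sum_remove_two[OF I ab False, of "f a b a"] diag(2) by simp
  have row_b: "(\<Sum>e\<in>I. f a b b e) = f a b a b + (\<Sum>e\<in>I - {a, b}. f a b b e)"
    using sum_remove_two[OF I ab False, of "f a b b"] diag(2) sym[of a b a b] by simp
  have row_other: "(\<Sum>e\<in>I. f a b c e) = f a b a c + f a b b c" if c: "c \<in> I - {a, b}" for c
  proof -
    have "f a b c e = 0" if "e \<in> I - {a, b}" for e
      using c that ab diag(2)[of a b c] disjoint[of a b c e] by (cases "e = c") auto
    then have "(\<Sum>e\<in>I - {a, b}. f a b c e) = 0" by simp
    then show ?thesis
      using sum_remove_two[OF I ab False, of "f a b c"] sym[of a b c a] sym[of a b c b] by simp
  qed
  have "(\<Sum>c\<in>I. \<Sum>e\<in>I. f a b c e)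
      = (\<Sum>e\<in>I. f a b a e) + (\<Sum>e\<in>I. f a b b e) + (\<Sum>c\<in>I - {a, b}. \<Sum>e\<in>I. f a b c e)"
    by (rule sum_remove_two[OF I ab False])
  also have "(\<Sum>c\<in>I - {a, b}. \<Sum>e\<in>I. f a b c e) = (\<Sum>c\<in>I - {a, b}. f a b a c) + (\<Sum>c\<in>I - {a, b}. f a b b c)"
    using row_other by (simp add: sum.distrib)
  finally show ?thesis
    unfolding row_a row_b by (simp add: algebra_simps mult_2)
qed

(* A pair (c, e) meets a pair (a, b) of distinct indices in both indices in two ways and in
   exactly one index in four ways; all four of the latter are brought to the shape f a b a e. *)
lemma sum_pairs_of_pairs:
  fixes f :: "'i \<Rightarrow> 'i \<Rightarrow> 'i \<Rightarrow> 'i \<Rightarrow> 'a::comm_semiring_1"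
  assumes I: "finite I"
    and diag: "\<And>a c e. f a a c e = 0" "\<And>a b c. f a b c c = 0"
    and disjoint: "\<And>a b c e. a \<in> I \<Longrightarrow> b \<in> I \<Longrightarrow> c \<in> I \<Longrightarrow> e \<in> I \<Longrightarrow> {a, b} \<inter> {c, e} = {} \<Longrightarrow> f a b c e = 0"
    and sym: "\<And>a b c e. f b a c e = f a b c e" "\<And>a b c e. f a b e c = f a b c e"
  shows "(\<Sum>a\<in>I. \<Sum>b\<in>I. \<Sum>c\<in>I. \<Sum>e\<in>I. f a b c e)
    = 2 * (\<Sum>a\<in>I. \<Sum>b\<in>I. f a b a b) + 4 * (\<Sum>a\<in>I. \<Sum>b\<in>I. \<Sum>e\<in>I - {a, b}. f a b a e)"
proof -
  have swap_ab: "(\<Sum>a\<in>I. \<Sum>b\<in>I. \<Sum>e\<in>I - {a, b}. f a b b e) = (\<Sum>a\<in>I. \<Sum>b\<in>I. \<Sum>e\<in>I - {a, b}. f a b a e)"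
    by (subst sum.swap) (simp add: sym(1) insert_commute)
  have inner: "(\<Sum>c\<in>I. \<Sum>e\<in>I. f a b c e)
      = 2 * f a b a b + 2 * (\<Sum>e\<in>I - {a, b}. f a b a e) + 2 * (\<Sum>e\<in>I - {a, b}. f a b b e)"
    if "a \<in> I" "b \<in> I" for a b
    by (rule sum_pairs_against_pair[OF I that diag disjoint sym(2)])
  have "(\<Sum>a\<in>I. \<Sum>b\<in>I. \<Sum>c\<in>I. \<Sum>e\<in>I. f a b c e)
      = (\<Sum>a\<in>I. \<Sum>b\<in>I. 2 * f a b a b + 2 * (\<Sum>e\<in>I - {a, b}. f a b a e) + 2 * (\<Sum>e\<in>I - {a, b}. f a b b e))"
    using inner by simp
  also have "\<dots> = 2 * (\<Sum>a\<in>I. \<Sum>b\<in>I. f a b a b) + 2 * (\<Sum>a\<in>I. \<Sum>b\<in>I. \<Sum>e\<in>I - {a, b}. f a b a e)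
      + 2 * (\<Sum>a\<in>I. \<Sum>b\<in>I. \<Sum>e\<in>I - {a, b}. f a b b e)"
    by (simp add: sum.distrib sum_distrib_left)
  also have "\<dots> = 2 * (\<Sum>a\<in>I. \<Sum>b\<in>I. f a b a b) + (2 + 2) * (\<Sum>a\<in>I. \<Sum>b\<in>I. \<Sum>e\<in>I - {a, b}. f a b a e)"
    unfolding swap_ab by (simp only: add.assoc distrib_right)
  finally show ?thesis by simp
qed

section \<open>Hermitian matrices and the Frobenius norm\<close>

definition hermitian_mat :: "nat \<Rightarrow> complex mat \<Rightarrow> bool" where
  "hermitian_mat d A \<longleftrightarrow> (\<forall>i<d. \<forall>j<d. A $$ (j, i) = cnj (A $$ (i, j)))"

definition frob_sq :: "nat \<Rightarrow> complex mat \<Rightarrow> real" where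
  "frob_sq d X = (\<Sum>i<d. \<Sum>j<d. (cmod (X $$ (i, j)))\<^sup>2)"

definition trace_mult :: "nat \<Rightarrow> complex mat \<Rightarrow> complex mat \<Rightarrow> complex" where
  "trace_mult d X Y = (\<Sum>i<d. \<Sum>j<d. X $$ (i, j) * Y $$ (j, i))"

definition trace_mult3 :: "nat \<Rightarrow> complex mat \<Rightarrow> complex mat \<Rightarrow> complex mat \<Rightarrow> complex" where
  "trace_mult3 d X Y W = (\<Sum>i<d. \<Sum>j<d. \<Sum>l<d. X $$ (i, j) * Y $$ (j, l) * W $$ (l, i))"

lemma frob_sq_nonneg: "0 \<le> frob_sq d X"
  unfolding frob_sq_def by (intro sum_nonneg) auto

lemma trace_mult_self_hermitian:
  assumes "hermitian_mat d X"
  shows "trace_mult d X X = of_real (frob_sq d X)"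
proof -
  have "X $$ (i, j) * X $$ (j, i) = of_real ((cmod (X $$ (i, j)))\<^sup>2)" if "i < d" "j < d" for i j
  proof -
    have "X $$ (j, i) = cnj (X $$ (i, j))"
      using assms that unfolding hermitian_mat_def by blast
    then show ?thesis by (simp flip: complex_norm_square)
  qed
  then show ?thesis
    unfolding trace_mult_def frob_sq_def of_real_sum by (intro sum.cong) auto
qed

lemma trace_mult_hermitian_real:
  assumes "hermitian_mat d X" "hermitian_mat d Y"
  shows "Im (trace_mult d X Y) = 0"
proof -
  have "cnj (X $$ (i, j) * Y $$ (j, i)) = X $$ (j, i) * Y $$ (i, j)" if "i < d" "j < d" for i j
  proof -
    have "X $$ (j, i) = cnj (X $$ (i, j))" "Y $$ (i, j) = cnj (Y $$ (j, i))"
      using assms that unfolding hermitian_mat_def by blast+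
    then show ?thesis by simp
  qed
  then have "cnj (trace_mult d X Y) = (\<Sum>i<d. \<Sum>j<d. X $$ (j, i) * Y $$ (i, j))"
    unfolding trace_mult_def by (simp add: cnj_sum)
  also have "\<dots> = trace_mult d X Y"
    unfolding trace_mult_def by (rule sum.swap)
  finally show ?thesis
    by (metis Reals_cnj_iff complex_is_Real_iff)
qed

lemma norm_trace_mult_sq_le: "(cmod (trace_mult d X Y))\<^sup>2 \<le> frob_sq d X * frob_sq d Y"
proof -
  have "trace_mult d X Y = (\<Sum>q\<in>{..<d} \<times> {..<d}. X $$ q * Y $$ (snd q, fst q))"
    unfolding trace_mult_def by (simp add: sum.cartesian_product split_def)
  moreover have "frob_sq d X = (\<Sum>q\<in>{..<d} \<times> {..<d}. (cmod (X $$ q))\<^sup>2)"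
    unfolding frob_sq_def by (simp add: sum.cartesian_product split_def)
  moreover have "frob_sq d Y = (\<Sum>q\<in>{..<d} \<times> {..<d}. (cmod (Y $$ (snd q, fst q)))\<^sup>2)"
    unfolding frob_sq_def by (subst sum.swap) (simp add: sum.cartesian_product split_def)
  ultimately show ?thesis
    using norm_sum_mult_sq_le[of "\<lambda>q. X $$ q" "\<lambda>q. Y $$ (snd q, fst q)"] by simp
qed

lemma index_mult_mat_square:
  "Y \<in> carrier_mat d d \<Longrightarrow> W \<in> carrier_mat d d \<Longrightarrow> i < d \<Longrightarrow> j < d \<Longrightarrow>
    (Y * W) $$ (i, j) = (\<Sum>l<d. Y $$ (i, l) * W $$ (l, j))"
  by (simp add: scalar_prod_def atLeast0LessThan)

lemma frob_sq_mult_le: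
  assumes "Y \<in> carrier_mat d d" "W \<in> carrier_mat d d"
  shows "frob_sq d (Y * W) \<le> frob_sq d Y * frob_sq d W"
proof -
  have "(cmod ((Y * W) $$ (i, j)))\<^sup>2 \<le> (\<Sum>l<d. (cmod (Y $$ (i, l)))\<^sup>2) * (\<Sum>l<d. (cmod (W $$ (l, j)))\<^sup>2)"
    if "i < d" "j < d" for i j
    unfolding index_mult_mat_square[OF assms that] by (rule norm_sum_mult_sq_le)
  then have "frob_sq d (Y * W) \<le> (\<Sum>i<d. \<Sum>j<d. (\<Sum>l<d. (cmod (Y $$ (i, l)))\<^sup>2) * (\<Sum>l<d. (cmod (W $$ (l, j)))\<^sup>2))"
    unfolding frob_sq_def by (intro sum_mono) auto
  also have "\<dots> = frob_sq d Y * (\<Sum>j<d. \<Sum>l<d. (cmod (W $$ (l, j)))\<^sup>2)"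
    unfolding frob_sq_def by (simp add: sum_product)
  also have "(\<Sum>j<d. \<Sum>l<d. (cmod (W $$ (l, j)))\<^sup>2) = frob_sq d W"
    unfolding frob_sq_def by (rule sum.swap)
  finally show ?thesis .
qed

lemma trace_mult3_eq_trace_mult:
  assumes "Y \<in> carrier_mat d d" "W \<in> carrier_mat d d"
  shows "trace_mult3 d X Y W = trace_mult d X (Y * W)"
  unfolding trace_mult3_def trace_mult_def
  by (intro sum.cong refl) (simp add: index_mult_mat_square[OF assms] sum_distrib_left mult.assoc del: index_mult_mat)

lemma norm_trace_mult3_sq_le:
  assumes "Y \<in> carrier_mat d d" "W \<in> carrier_mat d d"
  shows "(cmod (trace_mult3 d X Y W))\<^sup>2 \<le> frob_sq d X * frob_sq d Y * frob_sq d W"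
proof -
  have "(cmod (trace_mult3 d X Y W))\<^sup>2 \<le> frob_sq d X * frob_sq d (Y * W)"
    using assms by (simp add: trace_mult3_eq_trace_mult norm_trace_mult_sq_le)
  also have "\<dots> \<le> frob_sq d X * (frob_sq d Y * frob_sq d W)"
    using assms by (intro mult_left_mono frob_sq_mult_le frob_sq_nonneg)
  finally show ?thesis by (simp add: mult.assoc)
qed

section \<open>Density matrices\<close>

lemma nonneg_quadratic_imp_le:
  fixes p r m :: real
  assumes q: "\<And>s. 0 \<le> p * s\<^sup>2 - 2 * s * m + r * m" and "0 \<le> p" "0 \<le> r" "0 \<le> m"
  shows "m \<le> p * r"
proof (cases "p = 0")
  case True
  have "(r + 2) * m \<le> 0"
    using q[of "r + 1"] True by (simp add: algebra_simps)
  then have "m \<le> 0"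
    using \<open>0 \<le> r\<close> by (simp add: mult_le_0_iff)
  then show ?thesis using assms True by simp
next
  case False
  then have p: "0 < p" using assms by simp
  have "0 \<le> p * (m / p)\<^sup>2 - 2 * (m / p) * m + r * m" by (rule q)
  also have "\<dots> = r * m - m * m / p"
    using p by (simp add: power2_eq_square)
  finally have "m * m \<le> (p * r) * m"
    using p by (simp add: pos_divide_le_eq mult_ac)
  then show ?thesis
    using assms by (cases "m = 0") simp_all
qed

lemma psd_mat_supported_form:
  assumes "psd_mat d A" "J \<subseteq> {..<d}" "\<And>k. k \<notin> J \<Longrightarrow> v k = 0"
  shows "0 \<le> (\<Sum>k\<in>J. \<Sum>l\<in>J. cnj (v k) * A $$ (k, l) * v l)"
proof -
  have "0 \<le> (\<Sum>k<d. \<Sum>l<d. cnj (v k) * A $$ (k, l) * v l)"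
    using assms(1) unfolding psd_mat_def by blast
  also have "\<dots> = (\<Sum>k<d. \<Sum>l\<in>J. cnj (v k) * A $$ (k, l) * v l)"
    by (intro sum.cong refl sum.mono_neutral_right) (use assms(2,3) in auto)
  also have "\<dots> = (\<Sum>k\<in>J. \<Sum>l\<in>J. cnj (v k) * A $$ (k, l) * v l)"
    by (intro sum.mono_neutral_right) (use assms(2,3) in auto)
  finally show ?thesis .
qed

lemma psd_mat_diag_nonneg:
  assumes "psd_mat d A" "i < d"
  shows "0 \<le> A $$ (i, i)"
  using psd_mat_supported_form[OF assms(1), of "{i}" "\<lambda>k. if k = i then 1 else 0"] assms(2)
  by simp

lemma psd_mat_two_coords:
  assumes "psd_mat d A" "i < d" "j < d" "i \<noteq> j"
  shows "0 \<le> cnj x * A $$ (i, i) * x + cnj x * A $$ (i, j) * y + cnj y * A $$ (j, i) * x + cnj y * A $$ (j, j) * y"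
  using psd_mat_supported_form[OF assms(1), of "{i, j}" "\<lambda>k. if k = i then x else if k = j then y else 0"] assms(2-4)
  by (simp add: add.assoc)

lemma psd_mat_hermitian:
  assumes A: "psd_mat d A"
  shows "hermitian_mat d A"
  unfolding hermitian_mat_def
proof (intro allI impI)
  fix i j assume ij: "i < d" "j < d"
  have real_diag: "Im (A $$ (k, k)) = 0" if "k < d" for k
    using psd_mat_diag_nonneg[OF A that] by (simp add: less_eq_complex_def)
  show "A $$ (j, i) = cnj (A $$ (i, j))"
  proof (cases "i = j")
    case True
    then show ?thesis using real_diag[OF ij(1)] by (simp add: complex_eq_iff)
  next
    case False
    have "Im (A $$ (i, j)) + Im (A $$ (j, i)) = 0"
      using psd_mat_two_coords[OF A ij False, of 1 1] real_diag ij by (simp add: less_eq_complex_def)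
    moreover have "Re (A $$ (i, j)) - Re (A $$ (j, i)) = 0"
      using psd_mat_two_coords[OF A ij False, of 1 \<i>] real_diag ij by (simp add: less_eq_complex_def)
    ultimately show ?thesis by (simp add: complex_eq_iff)
  qed
qed

lemma psd_mat_entry_bound:
  assumes A: "psd_mat d A" and ij: "i < d" "j < d"
  shows "(cmod (A $$ (i, j)))\<^sup>2 \<le> Re (A $$ (i, i)) * Re (A $$ (j, j))"
proof -
  define p r where "p = Re (A $$ (i, i))" and "r = Re (A $$ (j, j))"
  have diag: "A $$ (i, i) = of_real p" "A $$ (j, j) = of_real r" "0 \<le> p" "0 \<le> r"
    using psd_mat_diag_nonneg[OF A ij(1)] psd_mat_diag_nonneg[OF A ij(2)]
    unfolding p_def r_def by (auto simp: less_eq_complex_def complex_eq_iff)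
  show ?thesis
  proof (cases "i = j")
    case True
    have "cmod (A $$ (i, i)) = p" using diag(1,3) by simp
    then show ?thesis using True by (simp add: p_def power2_eq_square)
  next
    case False
    define c where "c = A $$ (i, j)"
    have Aji: "A $$ (j, i) = cnj c"
      using psd_mat_hermitian[OF A] ij unfolding hermitian_mat_def c_def by blast
    have cc: "c * cnj c = of_real ((cmod c)\<^sup>2)"
      by (rule complex_norm_square[symmetric])
    have "0 \<le> p * s\<^sup>2 - 2 * s * (cmod c)\<^sup>2 + r * (cmod c)\<^sup>2" (is "0 \<le> ?q") for s
    proof -
      have "0 \<le> cnj (of_real s) * A $$ (i, i) * of_real s + cnj (of_real s) * A $$ (i, j) * (- cnj c)
          + cnj (- cnj c) * A $$ (j, i) * of_real s + cnj (- cnj c) * A $$ (j, j) * (- cnj c)"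
        by (rule psd_mat_two_coords[OF A ij False])
      also have "\<dots> = of_real (p * s\<^sup>2) + of_real r * (c * cnj c) - 2 * of_real s * (c * cnj c)"
        unfolding diag(1,2) Aji c_def[symmetric] by (simp add: algebra_simps power2_eq_square)
      also have "\<dots> = of_real ?q"
        unfolding cc by simp
      finally show ?thesis by (simp add: less_eq_complex_def)
    qed
    then have "(cmod c)\<^sup>2 \<le> p * r"
      by (rule nonneg_quadratic_imp_le) (use diag in auto)
    then show ?thesis unfolding c_def p_def r_def .
  qed
qed

lemma density_mat_carrier: "density_mat d A \<Longrightarrow> A \<in> carrier_mat d d"
  by (simp add: density_mat_def psd_mat_def)

lemma density_mat_trace: "density_mat d A \<Longrightarrow> (\<Sum>v<d. A $$ (v, v)) = 1"
  by (auto simp: density_mat_def psd_mat_def mat_trace_def)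

lemma frob_sq_density_le_1:
  assumes A: "density_mat d A"
  shows "frob_sq d A \<le> 1"
proof -
  have psd: "psd_mat d A" using A by (simp add: density_mat_def)
  have "frob_sq d A \<le> (\<Sum>i<d. \<Sum>j<d. Re (A $$ (i, i)) * Re (A $$ (j, j)))"
    unfolding frob_sq_def using psd_mat_entry_bound[OF psd] by (intro sum_mono) auto
  also have "\<dots> = (Re (\<Sum>i<d. A $$ (i, i)))\<^sup>2"
    by (simp add: sum_product power2_eq_square)
  also have "\<dots> = 1"
    using density_mat_trace[OF A] by simp
  finally show ?thesis .
qed

lemma finite_tuples [simp]: "finite (tuples d n)"
  unfolding tuples_def by (rule finite_PiE) auto

lemma tuples_comp_permutes:
  assumes "x \<in> tuples d n" "p permutes {..<n}"
  shows "x \<circ> p \<in> tuples d n"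
proof -
  have "p k < n" if "k < n" for k
    using permutes_in_image[OF assms(2), of k] that by simp
  moreover have "p k = k" if "\<not> k < n" for k
    using permutes_not_in[OF assms(2), of k] that by simp
  ultimately show ?thesis
    using assms(1) by (auto simp: tuples_def PiE_iff extensional_def)
qed

lemma expect_unfold: "expect d n P Y = (\<Sum>x\<in>tuples d n. \<Sum>y\<in>tuples d n. P x y * Y y x)"
  by (simp add: expect_def op_trace_def op_mult_def)

lemma expect_cong:
  assumes "\<And>x y. x \<in> tuples d n \<Longrightarrow> y \<in> tuples d n \<Longrightarrow> Y x y = Y' x y"
  shows "expect d n P Y = expect d n P Y'"
  unfolding expect_unfold using assms by (intro sum.cong) auto

lemma expect_sum: "expect d n P (\<lambda>x y. \<Sum>i\<in>I. Y i x y) = (\<Sum>i\<in>I. expect d n P (Y i))"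
proof -
  have "expect d n P (\<lambda>x y. \<Sum>i\<in>I. Y i x y)
      = (\<Sum>x\<in>tuples d n. \<Sum>i\<in>I. \<Sum>y\<in>tuples d n. P x y * Y i y x)"
    unfolding expect_unfold sum_distrib_left by (rule sum.cong[OF refl sum.swap])
  also have "\<dots> = (\<Sum>i\<in>I. expect d n P (Y i))"
    unfolding expect_unfold by (rule sum.swap)
  finally show ?thesis .
qed

lemma expect_scale: "expect d n P (\<lambda>x y. c * Y x y) = c * expect d n P Y"
  unfolding expect_unfold by (simp add: sum_distrib_left mult_ac)

lemma op_mult_sum:
  "op_mult d n (\<lambda>x y. \<Sum>i\<in>I. v i * X i x y) (\<lambda>x y. \<Sum>j\<in>J. w j * Y j x y)
    = (\<lambda>x z. \<Sum>i\<in>I. \<Sum>j\<in>J. v i * w j * op_mult d n (X i) (Y j) x z)"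
proof (intro ext)
  fix x z
  have "op_mult d n (\<lambda>x y. \<Sum>i\<in>I. v i * X i x y) (\<lambda>x y. \<Sum>j\<in>J. w j * Y j x y) x z
      = (\<Sum>y\<in>tuples d n. \<Sum>i\<in>I. \<Sum>j\<in>J. v i * w j * (X i x y * Y j y z))"
    unfolding op_mult_def by (simp add: sum_product mult_ac)
  also have "\<dots> = (\<Sum>i\<in>I. \<Sum>j\<in>J. \<Sum>y\<in>tuples d n. v i * w j * (X i x y * Y j y z))"
    by (subst sum.swap) (rule sum.cong[OF refl sum.swap])
  also have "\<dots> = (\<Sum>i\<in>I. \<Sum>j\<in>J. v i * w j * op_mult d n (X i) (Y j) x z)"
    unfolding op_mult_def by (simp add: sum_distrib_left)
  finally show "op_mult d n (\<lambda>x y. \<Sum>i\<in>I. v i * X i x y) (\<lambda>x y. \<Sum>j\<in>J. w j * Y j x y) x z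
      = (\<Sum>i\<in>I. \<Sum>j\<in>J. v i * w j * op_mult d n (X i) (Y j) x z)" .
qed

lemma variance_op_sum:
  "variance_op d n P (\<lambda>x y. \<Sum>i\<in>I. w i * X i x y) =
    (\<Sum>i\<in>I. \<Sum>j\<in>I. w i * w j *
      (expect d n P (op_mult d n (X i) (X j)) - expect d n P (X i) * expect d n P (X j)))"
  unfolding variance_op_def op_mult_sum
  by (simp add: expect_sum expect_scale power2_eq_square sum_product sum_subtractf right_diff_distrib mult_ac)

definition hermitian_op :: "nat \<Rightarrow> nat \<Rightarrow> tensor_op \<Rightarrow> bool" where
  "hermitian_op d n X \<longleftrightarrow> (\<forall>x\<in>tuples d n. \<forall>y\<in>tuples d n. X y x = cnj (X x y))"

lemma expect_hermitian_real:
  assumes P: "hermitian_op d n P" and Y: "hermitian_op d n Y"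
  shows "Im (expect d n P Y) = 0"
proof -
  have "cnj (P x y * Y y x) = P y x * Y x y" if "x \<in> tuples d n" "y \<in> tuples d n" for x y
  proof -
    have "P y x = cnj (P x y)" "Y x y = cnj (Y y x)"
      using P Y that unfolding hermitian_op_def by blast+
    then show ?thesis by simp
  qed
  then have "cnj (expect d n P Y) = (\<Sum>x\<in>tuples d n. \<Sum>y\<in>tuples d n. P y x * Y x y)"
    unfolding expect_unfold by (simp add: cnj_sum)
  also have "\<dots> = expect d n P Y"
    unfolding expect_unfold by (rule sum.swap)
  finally show ?thesis
    by (metis Reals_cnj_iff complex_is_Real_iff)
qed

lemma hermitian_op_mult_self:
  assumes "hermitian_op d n Y"
  shows "hermitian_op d n (op_mult d n Y Y)"
  unfolding hermitian_op_def
proof (intro ballI)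
  fix x z assume xz: "x \<in> tuples d n" "z \<in> tuples d n"
  have "Y z y * Y y x = cnj (Y x y * Y y z)" if "y \<in> tuples d n" for y
  proof -
    have "Y z y = cnj (Y y z)" "Y y x = cnj (Y x y)"
      using assms xz that unfolding hermitian_op_def by blast+
    then show ?thesis by simp
  qed
  then show "op_mult d n Y Y z x = cnj (op_mult d n Y Y x z)"
    unfolding op_mult_def by (simp add: cnj_sum)
qed

lemma variance_op_hermitian_real:
  assumes "hermitian_op d n P" "hermitian_op d n Y"
  shows "Im (variance_op d n P Y) = 0"
  using expect_hermitian_real[OF assms] expect_hermitian_real[OF assms(1) hermitian_op_mult_self[OF assms(2)]]
  by (simp add: variance_op_def power2_eq_square)

lemma hermitian_tensor_prod:
  assumes "\<And>k. k < n \<Longrightarrow> hermitian_mat d (A k)"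
  shows "hermitian_op d n (tensor_prod n A)"
  unfolding hermitian_op_def tensor_prod_def
proof (intro ballI)
  fix x y assume xy: "x \<in> tuples d n" "y \<in> tuples d n"
  have "A k $$ (y k, x k) = cnj (A k $$ (x k, y k))" if "k < n" for k
    using assms[OF that] xy that unfolding hermitian_mat_def tuples_def by blast
  then show "(\<Prod>k<n. A k $$ (y k, x k)) = cnj (\<Prod>k<n. A k $$ (x k, y k))"
    by (simp add: cnj_prod)
qed

section \<open>Permutation operators on product states\<close>

definition perm_op :: "(nat \<Rightarrow> nat) \<Rightarrow> tensor_op" where
  "perm_op p = (\<lambda>x y. if x = y \<circ> p then 1 else 0)"

lemma swap_op_eq_perm_op: "swap_op a b = perm_op (transpose a b)"
  by (simp add: swap_op_def perm_op_def)

lemma op_mult_perm_op: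
  assumes "q permutes {..<n}" "z \<in> tuples d n"
  shows "op_mult d n (perm_op p) (perm_op q) x z = perm_op (q \<circ> p) x z"
proof -
  have "op_mult d n (perm_op p) (perm_op q) x z = (\<Sum>y\<in>tuples d n. if y = z \<circ> q then perm_op p x y else 0)"
    unfolding op_mult_def by (intro sum.cong) (auto simp: perm_op_def)
  also have "\<dots> = perm_op p x (z \<circ> q)"
    using tuples_comp_permutes[OF assms(2,1)] by simp
  finally show ?thesis
    by (simp add: perm_op_def comp_assoc)
qed

definition tensor_perm_trace :: "nat \<Rightarrow> nat \<Rightarrow> (nat \<Rightarrow> complex mat) \<Rightarrow> (nat \<Rightarrow> nat) \<Rightarrow> complex" where
  "tensor_perm_trace d n A p = (\<Sum>x\<in>tuples d n. \<Prod>k<n. A k $$ (x k, x (p k)))"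

lemma expect_tensor_prod_perm_op:
  assumes "p permutes {..<n}"
  shows "expect d n (tensor_prod n A) (perm_op p) = tensor_perm_trace d n A p"
proof -
  have "(\<Sum>y\<in>tuples d n. tensor_prod n A x y * perm_op p y x) = tensor_prod n A x (x \<circ> p)"
    if "x \<in> tuples d n" for x
  proof -
    have "(\<Sum>y\<in>tuples d n. tensor_prod n A x y * perm_op p y x)
        = (\<Sum>y\<in>tuples d n. if y = x \<circ> p then tensor_prod n A x y else 0)"
      by (intro sum.cong) (auto simp: perm_op_def)
    then show ?thesis
      using tuples_comp_permutes[OF that assms] by simp
  qed
  then show ?thesis
    unfolding expect_unfold tensor_perm_trace_def by (simp add: tensor_prod_def)
qed

lemma tensor_perm_trace_reduce:
  assumes p: "p permutes S" and S: "S \<subseteq> {..<n}"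
    and traces: "\<And>k. k < n \<Longrightarrow> k \<notin> S \<Longrightarrow> (\<Sum>v<d. A k $$ (v, v)) = 1"
  shows "tensor_perm_trace d n A p = (\<Sum>u\<in>PiE S (\<lambda>_. {..<d}). \<Prod>k\<in>S. A k $$ (u k, u (p k)))"
proof -
  have fin: "finite S" using S finite_subset by blast
  have "(\<Sum>x\<in>PiE (S \<union> R) (\<lambda>_. {..<d}). \<Prod>k\<in>S \<union> R. A k $$ (x k, x (p k)))
      = (\<Sum>u\<in>PiE S (\<lambda>_. {..<d}). \<Prod>k\<in>S. A k $$ (u k, u (p k)))"
    if "finite R" "R \<subseteq> {..<n} - S" for R
    using that
  proof (induction R rule: finite_induct)
    case empty
    show ?case by simp
  next
    case (insert r R)
    have r: "r \<notin> S \<union> R" "p r = r" "(\<Sum>v<d. A r $$ (v, v)) = 1"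
      using insert.hyps insert.prems permutes_not_in[OF p] traces by auto
    have avoid: "k \<noteq> r \<and> p k \<noteq> r" if "k \<in> S \<union> R" for k
      using that r(1) permutes_in_image[OF p, of k] permutes_not_in[OF p, of k] insert.prems by auto
    have split: "(\<Prod>k\<in>insert r (S \<union> R). A k $$ ((x(r := v)) k, (x(r := v)) (p k)))
        = A r $$ (v, v) * (\<Prod>k\<in>S \<union> R. A k $$ (x k, x (p k)))" for x v
    proof -
      have "(\<Prod>k\<in>S \<union> R. A k $$ ((x(r := v)) k, (x(r := v)) (p k))) = (\<Prod>k\<in>S \<union> R. A k $$ (x k, x (p k)))"
        using avoid by (intro prod.cong) auto
      moreover have "finite (S \<union> R)" using fin insert.hyps by simp
      ultimately show ?thesis
        using r(1,2) by (subst prod.insert) auto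
    qed
    have "(\<Sum>x\<in>PiE (S \<union> insert r R) (\<lambda>_. {..<d}). \<Prod>k\<in>S \<union> insert r R. A k $$ (x k, x (p k)))
        = (\<Sum>v<d. \<Sum>x\<in>PiE (S \<union> R) (\<lambda>_. {..<d}). A r $$ (v, v) * (\<Prod>k\<in>S \<union> R. A k $$ (x k, x (p k))))"
      by (simp only: Un_insert_right sum_PiE_insert[OF r(1)] split)
    also have "\<dots> = (\<Sum>v<d. A r $$ (v, v)) * (\<Sum>x\<in>PiE (S \<union> R) (\<lambda>_. {..<d}). \<Prod>k\<in>S \<union> R. A k $$ (x k, x (p k)))"
      by (simp add: sum_product)
    finally show ?case
      using insert r(3) by simp
  qed
  from this[of "{..<n} - S"] show ?thesis
    using S by (simp add: tensor_perm_trace_def tuples_def Un_absorb1)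
qed

lemma tensor_perm_trace_id:
  assumes "\<And>k. k < n \<Longrightarrow> (\<Sum>v<d. A k $$ (v, v)) = 1"
  shows "tensor_perm_trace d n A id = 1"
  using tensor_perm_trace_reduce[where p = id and S = "{}"] assms by simp

lemma tensor_perm_trace_transpose:
  assumes "\<And>k. k < n \<Longrightarrow> (\<Sum>v<d. A k $$ (v, v)) = 1" and "a < n" "b < n" "a \<noteq> b"
  shows "tensor_perm_trace d n A (transpose a b) = trace_mult d (A a) (A b)"
proof -
  have "tensor_perm_trace d n A (transpose a b)
      = (\<Sum>u\<in>PiE {a, b} (\<lambda>_. {..<d}). \<Prod>k\<in>{a, b}. A k $$ (u k, u (transpose a b k)))"
    using assms by (intro tensor_perm_trace_reduce permutes_swap_id) auto
  also have "\<dots> = trace_mult d (A a) (A b)"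
    using assms(4) by (simp add: sum_PiE_insert trace_mult_def)
  finally show ?thesis .
qed

lemma tensor_perm_trace_3cycle:
  assumes "\<And>k. k < n \<Longrightarrow> (\<Sum>v<d. A k $$ (v, v)) = 1" and "a < n" "b < n" "e < n"
    and "a \<noteq> b" "a \<noteq> e" "b \<noteq> e"
    and "p permutes {a, b, e}" "p a = b" "p b = e" "p e = a"
  shows "tensor_perm_trace d n A p = trace_mult3 d (A a) (A b) (A e)"
proof -
  have "tensor_perm_trace d n A p = (\<Sum>u\<in>PiE {a, b, e} (\<lambda>_. {..<d}). \<Prod>k\<in>{a, b, e}. A k $$ (u k, u (p k)))"
    using assms by (intro tensor_perm_trace_reduce) auto
  also have "\<dots> = trace_mult3 d (A a) (A b) (A e)"
    using assms(5-7,9-11) by (simp add: sum_PiE_insert trace_mult3_def mult_ac)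
  finally show ?thesis .
qed

lemma tensor_perm_trace_disjoint_transpositions:
  assumes "\<And>k. k < n \<Longrightarrow> (\<Sum>v<d. A k $$ (v, v)) = 1" and "a < n" "b < n" "c < n" "e < n"
    and "distinct [a, b, c, e]"
  shows "tensor_perm_trace d n A (transpose c e \<circ> transpose a b)
    = trace_mult d (A a) (A b) * trace_mult d (A c) (A e)"
proof -
  have "transpose c e \<circ> transpose a b permutes {a, b, c, e}"
    by (intro permutes_compose permutes_swap_id) auto
  then have "tensor_perm_trace d n A (transpose c e \<circ> transpose a b)
      = (\<Sum>u\<in>PiE {a, b, c, e} (\<lambda>_. {..<d}). \<Prod>k\<in>{a, b, c, e}. A k $$ (u k, u ((transpose c e \<circ> transpose a b) k)))"
    using assms by (intro tensor_perm_trace_reduce) auto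
  also have "\<dots> = (\<Sum>i<d. \<Sum>j<d. \<Sum>l<d. \<Sum>m<d. (A a $$ (i, j) * A b $$ (j, i)) * (A c $$ (l, m) * A e $$ (m, l)))"
    using assms(6) by (simp add: sum_PiE_insert mult_ac)
  also have "\<dots> = trace_mult d (A a) (A b) * trace_mult d (A c) (A e)"
    unfolding trace_mult_def sum_distrib_right by (simp only: sum_distrib_left)
  finally show ?thesis .
qed

section \<open>The swap-test estimator\<close>

definition side_sign :: "nat \<Rightarrow> nat \<Rightarrow> complex" where
  "side_sign T k = (if k < T then 1 else -1)"

definition z_coeff :: "nat \<Rightarrow> nat \<Rightarrow> nat \<Rightarrow> complex" where
  "z_coeff T a b = side_sign T a * side_sign T b - of_bool (a = b)"

lemma side_sign_sq [simp]: "side_sign T k * side_sign T k = 1"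
  by (simp add: side_sign_def)

lemma cnj_side_sign [simp]: "cnj (side_sign T k) = side_sign T k"
  by (simp add: side_sign_def)

lemma z_coeff_diag [simp]: "z_coeff T a a = 0"
  by (simp add: z_coeff_def)

lemma z_coeff_sym: "z_coeff T b a = z_coeff T a b"
  by (simp add: z_coeff_def mult.commute)

lemma cnj_z_coeff [simp]: "cnj (z_coeff T a b) = z_coeff T a b"
  by (simp add: z_coeff_def side_sign_def)

lemma norm_z_coeff_le: "cmod (z_coeff T a b) \<le> 1"
  by (simp add: z_coeff_def side_sign_def)

lemma swap_op_commute: "swap_op a b = swap_op b a"
  by (simp add: swap_op_def transpose_commute)

lemma swap_op_sym: "swap_op a b y x = swap_op a b x y"
proof -
  have "(y = x \<circ> transpose a b) \<longleftrightarrow> (x = y \<circ> transpose a b)"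
    by (auto simp: comp_assoc)
  then show ?thesis by (simp add: swap_op_def)
qed

lemma sum_z_coeff_swap_op:
  "(\<Sum>a<2 * T. \<Sum>b<2 * T. z_coeff T a b * swap_op a b x y)
    = (\<Sum>i<T. \<Sum>j<T. if i \<noteq> j then swap_op i j x y else 0)
      + (\<Sum>i<T. \<Sum>j<T. if i \<noteq> j then swap_op (T + i) (T + j) x y else 0)
      - 2 * (\<Sum>i<T. \<Sum>j<T. swap_op i (T + j) x y)"
proof -
  have blocks: "(\<Sum>a<2 * T. \<Sum>b<2 * T. F a b) = (\<Sum>i<T. \<Sum>j<T. F i j) + (\<Sum>i<T. \<Sum>j<T. F i (T + j))
      + (\<Sum>i<T. \<Sum>j<T. F (T + i) j) + (\<Sum>i<T. \<Sum>j<T. F (T + i) (T + j))" for F :: "nat \<Rightarrow> nat \<Rightarrow> complex"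
    by (simp add: sum_lessThan_double sum.distrib)
  have "(\<Sum>i<T. \<Sum>j<T. z_coeff T i j * swap_op i j x y)
      = (\<Sum>i<T. \<Sum>j<T. if i \<noteq> j then swap_op i j x y else 0)"
    by (intro sum.cong refl) (auto simp: z_coeff_def side_sign_def)
  moreover have "(\<Sum>i<T. \<Sum>j<T. z_coeff T (T + i) (T + j) * swap_op (T + i) (T + j) x y)
      = (\<Sum>i<T. \<Sum>j<T. if i \<noteq> j then swap_op (T + i) (T + j) x y else 0)"
    by (intro sum.cong refl) (auto simp: z_coeff_def side_sign_def)
  moreover have "(\<Sum>i<T. \<Sum>j<T. z_coeff T i (T + j) * swap_op i (T + j) x y)
      = - (\<Sum>i<T. \<Sum>j<T. swap_op i (T + j) x y)"
    by (simp add: z_coeff_def side_sign_def sum_negf)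
  moreover have "(\<Sum>i<T. \<Sum>j<T. z_coeff T (T + i) j * swap_op (T + i) j x y)
      = - (\<Sum>i<T. \<Sum>j<T. swap_op j (T + i) x y)"
    by (simp add: z_coeff_def side_sign_def swap_op_commute[of "T + _"] sum_negf)
  moreover have "(\<Sum>i<T. \<Sum>j<T. swap_op j (T + i) x y) = (\<Sum>i<T. \<Sum>j<T. swap_op i (T + j) x y)"
    by (rule sum.swap)
  ultimately show ?thesis
    unfolding blocks by simp
qed

lemma Z_op_eq_sum:
  "Z_op T = (\<lambda>x y. \<Sum>q\<in>{..<2 * T} \<times> {..<2 * T}.
              z_coeff T (fst q) (snd q) / of_nat T ^ 2 * swap_op (fst q) (snd q) x y)"
proof (intro ext)
  fix x y
  have "(\<Sum>q\<in>{..<2 * T} \<times> {..<2 * T}. z_coeff T (fst q) (snd q) / of_nat T ^ 2 * swap_op (fst q) (snd q) x y)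
      = (\<Sum>a<2 * T. \<Sum>b<2 * T. z_coeff T a b * swap_op a b x y) / of_nat T ^ 2"
    by (simp add: sum.cartesian_product' sum_divide_distrib)
  also have "\<dots> = Z_op T x y"
    unfolding sum_z_coeff_swap_op Z_op_def by (simp add: add_divide_distrib diff_divide_distrib)
  finally show "Z_op T x y = (\<Sum>q\<in>{..<2 * T} \<times> {..<2 * T}.
      z_coeff T (fst q) (snd q) / of_nat T ^ 2 * swap_op (fst q) (snd q) x y)" ..
qed

lemma hermitian_Z_op: "hermitian_op d n (Z_op T)"
proof -
  have "cnj (swap_op a b x y) = swap_op a b y x" for a b x y
    by (subst swap_op_sym) (simp add: swap_op_def)
  then show ?thesis
    unfolding hermitian_op_def Z_op_eq_sum by (simp add: cnj_sum)
qed

locale swap_estimator =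
  fixes d T :: nat and \<rho> \<sigma> :: "nat \<Rightarrow> complex mat"
  assumes T_pos: "1 \<le> T"
    and states: "\<forall>t<T. density_mat d (\<rho> t) \<and> density_mat d (\<sigma> t)"
begin

definition factor :: "nat \<Rightarrow> complex mat" where
  "factor k = (if k < T then \<rho> k else \<sigma> (k - T))"

lemma density_factor: "k < 2 * T \<Longrightarrow> density_mat d (factor k)"
  unfolding factor_def using states by (cases "k < T") auto

lemma factor_carrier: "k < 2 * T \<Longrightarrow> factor k \<in> carrier_mat d d"
  using density_factor density_mat_carrier by blast

lemma factor_traces: "k < 2 * T \<Longrightarrow> (\<Sum>v<d. factor k $$ (v, v)) = 1"
  using density_factor density_mat_trace by blast

lemma hermitian_factor: "k < 2 * T \<Longrightarrow> hermitian_mat d (factor k)"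
  using density_factor psd_mat_hermitian unfolding density_mat_def by blast

lemma joint_state_eq: "joint_state T \<rho> \<sigma> = tensor_prod (2 * T) factor"
  unfolding joint_state_def factor_def ..

definition swap_mean :: "nat \<Rightarrow> nat \<Rightarrow> complex" where
  "swap_mean a b = tensor_perm_trace d (2 * T) factor (transpose a b)"

definition swap_cov :: "nat \<Rightarrow> nat \<Rightarrow> nat \<Rightarrow> nat \<Rightarrow> complex" where
  "swap_cov a b c e =
    tensor_perm_trace d (2 * T) factor (transpose c e \<circ> transpose a b) - swap_mean a b * swap_mean c e"

lemma expect_swap_op:
  assumes "a < 2 * T" "b < 2 * T"
  shows "expect d (2 * T) (tensor_prod (2 * T) factor) (swap_op a b) = swap_mean a b"
  unfolding swap_op_eq_perm_op swap_mean_def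
  using assms by (intro expect_tensor_prod_perm_op permutes_swap_id) auto

lemma expect_swap_op_mult:
  assumes "a < 2 * T" "b < 2 * T" "c < 2 * T" "e < 2 * T"
  shows "expect d (2 * T) (tensor_prod (2 * T) factor) (op_mult d (2 * T) (swap_op a b) (swap_op c e))
    = tensor_perm_trace d (2 * T) factor (transpose c e \<circ> transpose a b)"
proof -
  have "expect d (2 * T) (tensor_prod (2 * T) factor) (op_mult d (2 * T) (swap_op a b) (swap_op c e))
      = expect d (2 * T) (tensor_prod (2 * T) factor) (perm_op (transpose c e \<circ> transpose a b))"
    unfolding swap_op_eq_perm_op using assms
    by (intro expect_cong op_mult_perm_op permutes_swap_id) auto
  also have "\<dots> = tensor_perm_trace d (2 * T) factor (transpose c e \<circ> transpose a b)"
    using assms by (intro expect_tensor_prod_perm_op permutes_compose permutes_swap_id) auto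
  finally show ?thesis .
qed

lemma expect_Z_op:
  "expect d (2 * T) (joint_state T \<rho> \<sigma>) (Z_op T)
    = (\<Sum>a<2 * T. \<Sum>b<2 * T. z_coeff T a b * swap_mean a b) / of_nat T ^ 2"
proof -
  have "expect d (2 * T) (joint_state T \<rho> \<sigma>) (Z_op T)
      = (\<Sum>q\<in>{..<2 * T} \<times> {..<2 * T}. z_coeff T (fst q) (snd q) / of_nat T ^ 2 * swap_mean (fst q) (snd q))"
    unfolding joint_state_eq Z_op_eq_sum expect_sum expect_scale
    by (intro sum.cong refl) (auto simp: expect_swap_op)
  then show ?thesis
    by (simp add: sum.cartesian_product split_def sum_divide_distrib)
qed

lemma variance_Z_op:
  "variance_op d (2 * T) (joint_state T \<rho> \<sigma>) (Z_op T)
    = (\<Sum>a<2 * T. \<Sum>b<2 * T. \<Sum>c<2 * T. \<Sum>e<2 * T. z_coeff T a b * z_coeff T c e * swap_cov a b c e)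
      / of_nat T ^ 4"
proof -
  have "variance_op d (2 * T) (joint_state T \<rho> \<sigma>) (Z_op T)
      = (\<Sum>q\<in>{..<2 * T} \<times> {..<2 * T}. \<Sum>r\<in>{..<2 * T} \<times> {..<2 * T}.
          z_coeff T (fst q) (snd q) / of_nat T ^ 2 * (z_coeff T (fst r) (snd r) / of_nat T ^ 2)
          * swap_cov (fst q) (snd q) (fst r) (snd r))"
    unfolding joint_state_eq Z_op_eq_sum variance_op_sum
    by (intro sum.cong refl) (auto simp: expect_swap_op expect_swap_op_mult swap_cov_def)
  also have "\<dots> = (\<Sum>a<2 * T. \<Sum>b<2 * T. \<Sum>c<2 * T. \<Sum>e<2 * T.
      z_coeff T a b * z_coeff T c e * swap_cov a b c e / of_nat T ^ 4)"
  proof -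
    have "x / t ^ 2 * (y / t ^ 2) * z = x * y * z / t ^ 4" for x y z t :: complex
      by (simp add: times_divide_times_eq flip: power_add)
    then show ?thesis by (simp only: sum.cartesian_product' fst_conv snd_conv)
  qed
  finally show ?thesis
    by (simp add: sum_divide_distrib)
qed

lemma swap_mean_self: "swap_mean a a = 1"
  unfolding swap_mean_def by (simp add: tensor_perm_trace_id factor_traces)

lemma swap_mean_sym: "swap_mean b a = swap_mean a b"
  by (simp add: swap_mean_def transpose_commute)

lemma swap_mean_eq_trace_mult:
  "a < 2 * T \<Longrightarrow> b < 2 * T \<Longrightarrow> a \<noteq> b \<Longrightarrow> swap_mean a b = trace_mult d (factor a) (factor b)"
  unfolding swap_mean_def by (rule tensor_perm_trace_transpose) (auto simp: factor_traces)

lemma norm_swap_mean_le: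
  assumes "a < 2 * T" "b < 2 * T"
  shows "cmod (swap_mean a b) \<le> 1"
proof (cases "a = b")
  case False
  have "(cmod (swap_mean a b))\<^sup>2 \<le> frob_sq d (factor a) * frob_sq d (factor b)"
    using assms False by (simp add: swap_mean_eq_trace_mult norm_trace_mult_sq_le)
  also have "\<dots> \<le> 1"
    using assms by (intro mult_le_one frob_sq_density_le_1 density_factor frob_sq_nonneg)
  finally show ?thesis
    using power2_le_imp_le[of "cmod (swap_mean a b)" 1] by simp
qed (simp add: swap_mean_self)

lemma swap_mean_real: "a < 2 * T \<Longrightarrow> b < 2 * T \<Longrightarrow> Im (swap_mean a b) = 0"
  by (cases "a = b") (simp_all add: swap_mean_self swap_mean_eq_trace_mult trace_mult_hermitian_real hermitian_factor)

lemma swap_cov_sym: "swap_cov b a c e = swap_cov a b c e" "swap_cov a b e c = swap_cov a b c e"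
  by (simp_all add: swap_cov_def swap_mean_sym transpose_commute)

lemma swap_cov_same: "swap_cov a b a b = 1 - (swap_mean a b)\<^sup>2"
  by (simp add: swap_cov_def tensor_perm_trace_id factor_traces power2_eq_square)

lemma swap_cov_overlap:
  assumes "a < 2 * T" "b < 2 * T" "e < 2 * T" "a \<noteq> b" "a \<noteq> e" "b \<noteq> e"
  shows "swap_cov a b a e = trace_mult3 d (factor a) (factor b) (factor e) - swap_mean a b * swap_mean a e"
proof -
  (* transpose a e \<circ> transpose a b is the 3-cycle a \<mapsto> b \<mapsto> e \<mapsto> a *)
  have "transpose a e \<circ> transpose a b permutes {a, b, e}"
    by (intro permutes_compose permutes_swap_id) auto
  then have "tensor_perm_trace d (2 * T) factor (transpose a e \<circ> transpose a b)
      = trace_mult3 d (factor a) (factor b) (factor e)"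
    using assms by (intro tensor_perm_trace_3cycle) (auto simp: factor_traces)
  then show ?thesis by (simp add: swap_cov_def)
qed

lemma swap_cov_disjoint:
  assumes "a < 2 * T" "b < 2 * T" "c < 2 * T" "e < 2 * T" "distinct [a, b, c, e]"
  shows "swap_cov a b c e = 0"
  using assms
  by (simp add: swap_cov_def tensor_perm_trace_disjoint_transpositions factor_traces swap_mean_eq_trace_mult)

definition diff_avg :: "complex mat" where
  "diff_avg = avg_state d T \<rho> - avg_state d T \<sigma>"

lemma diff_avg_carrier: "diff_avg \<in> carrier_mat d d"
  unfolding diff_avg_def avg_state_def by (intro minus_carrier_mat) auto

lemma diff_avg_entry:
  assumes "i < d" "j < d"
  shows "diff_avg $$ (i, j) = (\<Sum>k<2 * T. side_sign T k * factor k $$ (i, j)) / of_nat T"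
  using assms
  by (simp add: diff_avg_def avg_state_def sum_lessThan_double side_sign_def factor_def sum_negf diff_divide_distrib)

lemma scaled_diff_avg_entry:
  "i < d \<Longrightarrow> j < d \<Longrightarrow> of_nat T * diff_avg $$ (i, j) = (\<Sum>k<2 * T. side_sign T k * factor k $$ (i, j))"
  using T_pos by (simp add: diff_avg_entry)

lemma hermitian_diff_avg: "hermitian_mat d diff_avg"
  unfolding hermitian_mat_def
proof (intro allI impI)
  fix i j assume ij: "i < d" "j < d"
  have "(\<Sum>k<2 * T. side_sign T k * factor k $$ (j, i)) = (\<Sum>k<2 * T. side_sign T k * cnj (factor k $$ (i, j)))"
  proof (rule sum.cong[OF refl])
    fix k assume "k \<in> {..<2 * T}"
    then have "factor k $$ (j, i) = cnj (factor k $$ (i, j))"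
      using hermitian_factor ij unfolding hermitian_mat_def by blast
    then show "side_sign T k * factor k $$ (j, i) = side_sign T k * cnj (factor k $$ (i, j))" by simp
  qed
  then show "diff_avg $$ (j, i) = cnj (diff_avg $$ (i, j))"
    using ij by (simp add: diff_avg_entry cnj_sum)
qed

lemma mu_val_eq_frob_sq: "mu_val d T \<rho> \<sigma> = of_real (frob_sq d diff_avg)"
proof -
  have "mu_val d T \<rho> \<sigma> = trace_mult d diff_avg diff_avg"
    using diff_avg_carrier
    by (simp add: mu_val_def Let_def diff_avg_def[symmetric] mat_trace_def trace_mult_def scalar_prod_def atLeast0LessThan)
  then show ?thesis
    by (simp add: trace_mult_self_hermitian hermitian_diff_avg)
qed

lemma sum_signs_trace_mult:
  "(\<Sum>a<2 * T. \<Sum>b<2 * T. side_sign T a * side_sign T b * trace_mult d (factor a) (factor b))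
    = of_nat T ^ 2 * trace_mult d diff_avg diff_avg"
proof -
  have "of_nat T ^ 2 * trace_mult d diff_avg diff_avg
      = (\<Sum>i<d. \<Sum>j<d. (of_nat T * diff_avg $$ (i, j)) * (of_nat T * diff_avg $$ (j, i)))"
    unfolding trace_mult_def by (simp add: sum_distrib_left power2_eq_square mult_ac)
  also have "\<dots> = (\<Sum>i<d. \<Sum>j<d. \<Sum>a<2 * T. \<Sum>b<2 * T.
      side_sign T a * side_sign T b * (factor a $$ (i, j) * factor b $$ (j, i)))"
    using T_pos by (intro sum.cong refl) (simp add: diff_avg_entry sum_product mult_ac)
  also have "\<dots> = (\<Sum>a<2 * T. \<Sum>b<2 * T. side_sign T a * side_sign T b * trace_mult d (factor a) (factor b))"
    unfolding trace_mult_def sum_distrib_left by (rule double_sum_swap)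
  finally show ?thesis ..
qed

lemma expect_Z_op_bias:
  "expect d (2 * T) (joint_state T \<rho> \<sigma>) (Z_op T) - mu_val d T \<rho> \<sigma>
    = - of_real (\<Sum>a<2 * T. frob_sq d (factor a)) / of_nat T ^ 2"
proof -
  let ?tr = "\<lambda>a b. trace_mult d (factor a) (factor b)"
  have "(\<Sum>a<2 * T. \<Sum>b<2 * T. z_coeff T a b * swap_mean a b)
      = (\<Sum>a<2 * T. \<Sum>b<2 * T. side_sign T a * side_sign T b * ?tr a b - (if a = b then ?tr a b else 0))"
    by (intro sum.cong refl) (auto simp: z_coeff_def swap_mean_eq_trace_mult)
  also have "\<dots> = (\<Sum>a<2 * T. \<Sum>b<2 * T. side_sign T a * side_sign T b * ?tr a b)
      - (\<Sum>a<2 * T. \<Sum>b<2 * T. if a = b then ?tr a b else 0)"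
    by (simp only: sum_subtractf)
  also have "(\<Sum>a<2 * T. \<Sum>b<2 * T. if a = b then ?tr a b else 0) = (\<Sum>a<2 * T. ?tr a a)"
    by (rule sum.cong[OF refl]) simp
  also have "\<dots> = of_real (\<Sum>a<2 * T. frob_sq d (factor a))"
    by (simp add: trace_mult_self_hermitian hermitian_factor of_real_sum)
  finally show ?thesis
    using T_pos
    by (simp add: expect_Z_op mu_val_eq_frob_sq sum_signs_trace_mult diff_divide_distrib
        trace_mult_self_hermitian hermitian_diff_avg)
qed

lemma norm_expect_Z_op_bias_le:
  "cmod (expect d (2 * T) (joint_state T \<rho> \<sigma>) (Z_op T) - mu_val d T \<rho> \<sigma>) \<le> 2 / real T"
proof -
  define F where "F = (\<Sum>a<2 * T. frob_sq d (factor a))"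
  have "0 \<le> F" unfolding F_def by (intro sum_nonneg frob_sq_nonneg)
  moreover have "F \<le> 2 * real T"
  proof -
    have "F \<le> (\<Sum>a<2 * T. 1)"
      unfolding F_def by (intro sum_mono frob_sq_density_le_1 density_factor) simp
    then show ?thesis by simp
  qed
  ultimately have "F / real T ^ 2 \<le> 2 * real T / real T ^ 2"
    by (intro divide_right_mono) auto
  also have "\<dots> = 2 / real T"
    by (simp add: power2_eq_square)
  finally show ?thesis
    using \<open>0 \<le> F\<close>
    by (simp add: expect_Z_op_bias F_def[symmetric] norm_divide norm_power)
qed

lemma norm_trace_mult3_factor_le:
  assumes "a < 2 * T" "b < 2 * T" "e < 2 * T"
  shows "cmod (trace_mult3 d (factor a) (factor b) (factor e)) \<le> 1"
proof -
  have "(cmod (trace_mult3 d (factor a) (factor b) (factor e)))\<^sup>2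
      \<le> frob_sq d (factor a) * frob_sq d (factor b) * frob_sq d (factor e)"
    using assms by (intro norm_trace_mult3_sq_le factor_carrier)
  also have "\<dots> \<le> 1"
    using assms by (intro mult_le_one frob_sq_density_le_1 density_factor frob_sq_nonneg mult_nonneg_nonneg)
  finally show ?thesis
    using power2_le_imp_le[of "cmod (trace_mult3 d (factor a) (factor b) (factor e))" 1] by simp
qed

lemma sum_signs_trace_mult3:
  "(\<Sum>b<2 * T. \<Sum>e<2 * T. side_sign T b * side_sign T e * trace_mult3 d X (factor b) (factor e))
    = of_nat T ^ 2 * trace_mult3 d X diff_avg diff_avg"
proof -
  have "of_nat T ^ 2 * trace_mult3 d X diff_avg diff_avg
      = (\<Sum>i<d. \<Sum>j<d. \<Sum>l<d. X $$ (i, j) * (of_nat T * diff_avg $$ (j, l)) * (of_nat T * diff_avg $$ (l, i)))"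
    unfolding trace_mult3_def by (simp add: sum_distrib_left power2_eq_square mult_ac)
  also have "\<dots> = (\<Sum>i<d. \<Sum>j<d. \<Sum>l<d. X $$ (i, j) * (\<Sum>b<2 * T. side_sign T b * factor b $$ (j, l))
      * (\<Sum>e<2 * T. side_sign T e * factor e $$ (l, i)))"
    by (intro sum.cong refl) (simp add: scaled_diff_avg_entry)
  also have "\<dots> = (\<Sum>i<d. \<Sum>j<d. \<Sum>l<d. \<Sum>b<2 * T. \<Sum>e<2 * T.
      side_sign T b * side_sign T e * (X $$ (i, j) * factor b $$ (j, l) * factor e $$ (l, i)))"
    by (simp add: sum_distrib_left sum_distrib_right mult_ac)
  also have "\<dots> = (\<Sum>i<d. \<Sum>b<2 * T. \<Sum>e<2 * T. \<Sum>j<d. \<Sum>l<d.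
      side_sign T b * side_sign T e * (X $$ (i, j) * factor b $$ (j, l) * factor e $$ (l, i)))"
    by (intro sum.cong refl double_sum_swap)
  also have "\<dots> = (\<Sum>b<2 * T. \<Sum>e<2 * T. \<Sum>i<d. \<Sum>j<d. \<Sum>l<d.
      side_sign T b * side_sign T e * (X $$ (i, j) * factor b $$ (j, l) * factor e $$ (l, i)))"
    by (subst sum.swap) (rule sum.cong[OF refl sum.swap])
  also have "\<dots> = (\<Sum>b<2 * T. \<Sum>e<2 * T. side_sign T b * side_sign T e * trace_mult3 d X (factor b) (factor e))"
    unfolding trace_mult3_def by (simp add: sum_distrib_left)
  finally show ?thesis ..
qed

definition cycle_sum :: "nat \<Rightarrow> complex" where
  "cycle_sum a = (\<Sum>b<2 * T. \<Sum>e<2 * T. z_coeff T a b * z_coeff T a e * trace_mult3 d (factor a) (factor b) (factor e))"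

definition swap_row_sum :: "nat \<Rightarrow> complex" where
  "swap_row_sum a = (\<Sum>b<2 * T. z_coeff T a b * swap_mean a b)"

lemma norm_sum_signs_trace_mult3_le:
  assumes a: "a < 2 * T"
  shows "cmod (\<Sum>b<2 * T. \<Sum>e<2 * T. side_sign T b * side_sign T e * trace_mult3 d (factor a) (factor b) (factor e))
    \<le> real T ^ 2 * frob_sq d diff_avg"
proof -
  have "(cmod (trace_mult3 d (factor a) diff_avg diff_avg))\<^sup>2
      \<le> frob_sq d (factor a) * frob_sq d diff_avg * frob_sq d diff_avg"
    by (intro norm_trace_mult3_sq_le diff_avg_carrier)
  also have "\<dots> \<le> (frob_sq d diff_avg)\<^sup>2"
    unfolding power2_eq_square mult.assoc
    by (intro mult_left_le_one_le frob_sq_density_le_1 density_factor a mult_nonneg_nonneg frob_sq_nonneg)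
  finally have "cmod (trace_mult3 d (factor a) diff_avg diff_avg) \<le> frob_sq d diff_avg"
    by (rule power2_le_imp_le) (rule frob_sq_nonneg)
  then show ?thesis
    by (simp add: sum_signs_trace_mult3 norm_mult norm_power mult_left_mono)
qed

lemma norm_cycle_sum_correction_le:
  assumes a: "a < 2 * T"
  shows "cmod (\<Sum>b<2 * T. \<Sum>e<2 * T. (z_coeff T a b * z_coeff T a e - side_sign T b * side_sign T e)
      * trace_mult3 d (factor a) (factor b) (factor e)) \<le> 4 * real T"
proof -
  have "cmod (\<Sum>b<2 * T. \<Sum>e<2 * T. (z_coeff T a b * z_coeff T a e - side_sign T b * side_sign T e)
      * trace_mult3 d (factor a) (factor b) (factor e)) \<le> (\<Sum>b<2 * T. \<Sum>e<2 * T. of_bool (b = a) + of_bool (e = a))"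
  proof (intro order_trans[OF norm_sum] sum_mono order_trans[OF norm_sum])
    fix b e assume "b \<in> {..<2 * T}" "e \<in> {..<2 * T}"
    then have "cmod (trace_mult3 d (factor a) (factor b) (factor e)) \<le> 1"
      using a by (intro norm_trace_mult3_factor_le) auto
    moreover have "cmod (z_coeff T a b * z_coeff T a e - side_sign T b * side_sign T e) \<le> of_bool (b = a) + of_bool (e = a)"
      by (simp add: z_coeff_def side_sign_def)
    ultimately have "cmod (z_coeff T a b * z_coeff T a e - side_sign T b * side_sign T e)
        * cmod (trace_mult3 d (factor a) (factor b) (factor e)) \<le> (of_bool (b = a) + of_bool (e = a)) * 1"
      by (intro mult_mono) auto
    then show "cmod ((z_coeff T a b * z_coeff T a e - side_sign T b * side_sign T e)
        * trace_mult3 d (factor a) (factor b) (factor e)) \<le> of_bool (b = a) + of_bool (e = a)"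
      by (simp add: norm_mult)
  qed
  also have "\<dots> = 4 * real T"
    using a by (simp add: sum.distrib)
  finally show ?thesis .
qed

lemma norm_cycle_sum_le:
  assumes "a < 2 * T"
  shows "cmod (cycle_sum a) \<le> real T ^ 2 * frob_sq d diff_avg + 4 * real T"
proof -
  let ?C = "\<lambda>b e. trace_mult3 d (factor a) (factor b) (factor e)"
  have "cycle_sum a = (\<Sum>b<2 * T. \<Sum>e<2 * T. side_sign T b * side_sign T e * ?C b e)
      + (\<Sum>b<2 * T. \<Sum>e<2 * T. (z_coeff T a b * z_coeff T a e - side_sign T b * side_sign T e) * ?C b e)"
    unfolding cycle_sum_def by (simp add: algebra_simps flip: sum.distrib)
  then have "cmod (cycle_sum a) \<le> cmod (\<Sum>b<2 * T. \<Sum>e<2 * T. side_sign T b * side_sign T e * ?C b e)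
      + cmod (\<Sum>b<2 * T. \<Sum>e<2 * T. (z_coeff T a b * z_coeff T a e - side_sign T b * side_sign T e) * ?C b e)"
    by (simp only: norm_triangle_ineq)
  then show ?thesis
    using norm_sum_signs_trace_mult3_le[OF assms] norm_cycle_sum_correction_le[OF assms] by linarith
qed

lemma swap_row_sum_real:
  assumes "a < 2 * T"
  shows "Im (swap_row_sum a) = 0"
proof -
  have "Im (z_coeff T a b * swap_mean a b) = 0" if "b < 2 * T" for b
    using assms that by (simp add: swap_mean_real z_coeff_def side_sign_def)
  then show ?thesis
    unfolding swap_row_sum_def Im_sum by (intro sum.neutral) auto
qed

lemma covariance_sum_eq:
  "(\<Sum>a<2 * T. \<Sum>b<2 * T. \<Sum>c<2 * T. \<Sum>e<2 * T. z_coeff T a b * z_coeff T c e * swap_cov a b c e)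
    = 2 * (\<Sum>a<2 * T. \<Sum>b<2 * T. z_coeff T a b * z_coeff T a b * (1 - (swap_mean a b)\<^sup>2))
      + 4 * (\<Sum>a<2 * T. \<Sum>b<2 * T. \<Sum>e\<in>{..<2 * T} - {a, b}. z_coeff T a b * z_coeff T a e * swap_cov a b a e)"
proof -
  have "(\<Sum>a<2 * T. \<Sum>b<2 * T. \<Sum>c<2 * T. \<Sum>e<2 * T. z_coeff T a b * z_coeff T c e * swap_cov a b c e)
      = 2 * (\<Sum>a<2 * T. \<Sum>b<2 * T. z_coeff T a b * z_coeff T a b * swap_cov a b a b)
        + 4 * (\<Sum>a<2 * T. \<Sum>b<2 * T. \<Sum>e\<in>{..<2 * T} - {a, b}. z_coeff T a b * z_coeff T a e * swap_cov a b a e)"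
  proof (rule sum_pairs_of_pairs)
    fix a b c e assume "a \<in> {..<2 * T}" "b \<in> {..<2 * T}" "c \<in> {..<2 * T}" "e \<in> {..<2 * T}"
      and "{a, b} \<inter> {c, e} = {}"
    then show "z_coeff T a b * z_coeff T c e * swap_cov a b c e = 0"
      by (cases "a = b \<or> c = e") (auto simp: swap_cov_disjoint)
  qed (simp_all add: z_coeff_sym swap_cov_sym)
  then show ?thesis by (simp add: swap_cov_same)
qed

lemma overlap_covariance_sum_eq:
  "(\<Sum>a<2 * T. \<Sum>b<2 * T. \<Sum>e\<in>{..<2 * T} - {a, b}. z_coeff T a b * z_coeff T a e * swap_cov a b a e)
    = (\<Sum>a<2 * T. cycle_sum a - (swap_row_sum a)\<^sup>2)
      - (\<Sum>a<2 * T. \<Sum>b<2 * T. z_coeff T a b * z_coeff T a b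
          * (trace_mult3 d (factor a) (factor b) (factor b) - (swap_mean a b)\<^sup>2))"
proof -
  let ?h = "\<lambda>a b e. z_coeff T a b * z_coeff T a e
    * (trace_mult3 d (factor a) (factor b) (factor e) - swap_mean a b * swap_mean a e)"
  have row: "(\<Sum>e\<in>{..<2 * T} - {a, b}. z_coeff T a b * z_coeff T a e * swap_cov a b a e)
      = (\<Sum>e<2 * T. ?h a b e) - ?h a b b" if "a < 2 * T" "b < 2 * T" for a b
  proof (cases "a = b")
    case False
    have "(\<Sum>e\<in>{..<2 * T} - {a, b}. z_coeff T a b * z_coeff T a e * swap_cov a b a e)
        = (\<Sum>e\<in>{..<2 * T} - {a, b}. ?h a b e)"
      using that False by (intro sum.cong refl) (auto simp: swap_cov_overlap)
    moreover have "(\<Sum>e<2 * T. ?h a b e) = ?h a b a + ?h a b b + (\<Sum>e\<in>{..<2 * T} - {a, b}. ?h a b e)"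
      using that False by (intro sum_remove_two) auto
    ultimately show ?thesis by simp
  qed simp
  have expand: "(\<Sum>b<2 * T. \<Sum>e<2 * T. ?h a b e) = cycle_sum a - (swap_row_sum a)\<^sup>2" for a
    unfolding cycle_sum_def swap_row_sum_def
    by (simp add: right_diff_distrib sum_subtractf power2_eq_square sum_product mult_ac)
  have "(\<Sum>a<2 * T. \<Sum>b<2 * T. \<Sum>e\<in>{..<2 * T} - {a, b}. z_coeff T a b * z_coeff T a e * swap_cov a b a e)
      = (\<Sum>a<2 * T. \<Sum>b<2 * T. (\<Sum>e<2 * T. ?h a b e) - ?h a b b)"
    by (intro sum.cong refl row) auto
  also have "\<dots> = (\<Sum>a<2 * T. cycle_sum a - (swap_row_sum a)\<^sup>2) - (\<Sum>a<2 * T. \<Sum>b<2 * T. ?h a b b)"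
    by (simp only: sum_subtractf expand)
  finally show ?thesis by (simp add: power2_eq_square)
qed

lemma re_sum_cycle_sum_le:
  "Re (\<Sum>a<2 * T. cycle_sum a - (swap_row_sum a)\<^sup>2) \<le> 2 * real T ^ 3 * frob_sq d diff_avg + 8 * real T ^ 2"
proof -
  have "Re (\<Sum>a<2 * T. cycle_sum a - (swap_row_sum a)\<^sup>2) = (\<Sum>a<2 * T. Re (cycle_sum a) - (Re (swap_row_sum a))\<^sup>2)"
    unfolding Re_sum using swap_row_sum_real by (intro sum.cong) (auto simp: power2_eq_square)
  also have "\<dots> \<le> (\<Sum>a<2 * T. real T ^ 2 * frob_sq d diff_avg + 4 * real T)"
  proof (intro sum_mono)
    fix a assume "a \<in> {..<2 * T}"
    then have "cmod (cycle_sum a) \<le> real T ^ 2 * frob_sq d diff_avg + 4 * real T"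
      by (intro norm_cycle_sum_le) auto
    then show "Re (cycle_sum a) - (Re (swap_row_sum a))\<^sup>2 \<le> real T ^ 2 * frob_sq d diff_avg + 4 * real T"
      using complex_Re_le_cmod[of "cycle_sum a"] zero_le_power2[of "Re (swap_row_sum a)"] by linarith
  qed
  finally show ?thesis
    by (simp add: algebra_simps power2_eq_square power3_eq_cube)
qed

lemma re_covariance_sum_le:
  "Re (\<Sum>a<2 * T. \<Sum>b<2 * T. \<Sum>c<2 * T. \<Sum>e<2 * T. z_coeff T a b * z_coeff T c e * swap_cov a b c e)
    \<le> 80 * real T ^ 2 + 8 * real T ^ 3 * frob_sq d diff_avg"
proof -
  define X where "X = (\<Sum>a<2 * T. \<Sum>b<2 * T. z_coeff T a b * z_coeff T a b * (1 - (swap_mean a b)\<^sup>2))"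
  define W where "W = (\<Sum>a<2 * T. \<Sum>b<2 * T. z_coeff T a b * z_coeff T a b
      * (trace_mult3 d (factor a) (factor b) (factor b) - (swap_mean a b)\<^sup>2))"
  have "cmod X \<le> real (card {..<2 * T}) * real (card {..<2 * T}) * 2"
    unfolding X_def
    by (intro norm_double_sum_le norm_square_mult_diff_square_le norm_z_coeff_le norm_swap_mean_le) auto
  then have "Re X \<le> 8 * real T ^ 2"
    using complex_Re_le_cmod[of X] by (simp add: power2_eq_square)
  moreover have "cmod W \<le> real (card {..<2 * T}) * real (card {..<2 * T}) * 2"
    unfolding W_def
    by (intro norm_double_sum_le norm_square_mult_diff_square_le norm_z_coeff_le norm_swap_mean_le
        norm_trace_mult3_factor_le) auto
  then have "- Re W \<le> 8 * real T ^ 2"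
    using abs_Re_le_cmod[of W] by (simp add: power2_eq_square)
  ultimately show ?thesis
    using re_sum_cycle_sum_le
    unfolding covariance_sum_eq overlap_covariance_sum_eq X_def[symmetric] W_def[symmetric]
    by simp
qed

lemma variance_Z_op_le:
  "variance_op d (2 * T) (joint_state T \<rho> \<sigma>) (Z_op T)
    \<le> complex_of_real (16 / real T * Re (mu_val d T \<rho> \<sigma>) + 80 / (real T)\<^sup>2)"
proof -
  define F where "F = frob_sq d diff_avg"
  define V where "V = variance_op d (2 * T) (joint_state T \<rho> \<sigma>) (Z_op T)"
  have T: "0 < real T" using T_pos by simp
  have "Im V = 0"
    unfolding V_def joint_state_eq
    by (intro variance_op_hermitian_real hermitian_tensor_prod hermitian_factor hermitian_Z_op)
  have "Re V = Re (\<Sum>a<2 * T. \<Sum>b<2 * T. \<Sum>c<2 * T. \<Sum>e<2 * T. z_coeff T a b * z_coeff T c e * swap_cov a b c e)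
      / real T ^ 4"
    unfolding V_def variance_Z_op by (simp flip: Re_divide_of_real)
  also have "\<dots> \<le> (80 * real T ^ 2 + 8 * real T ^ 3 * F) / real T ^ 4"
    unfolding F_def by (intro divide_right_mono re_covariance_sum_le) simp
  also have "\<dots> = 8 / real T * F + 80 / (real T)\<^sup>2"
    using T by (simp add: field_simps eval_nat_numeral)
  also have "\<dots> \<le> 16 / real T * F + 80 / (real T)\<^sup>2"
    using T frob_sq_nonneg[of d diff_avg] unfolding F_def
    by (intro add_right_mono mult_right_mono divide_right_mono) auto
  finally have "Re V \<le> 16 / real T * Re (mu_val d T \<rho> \<sigma>) + 80 / (real T)\<^sup>2"
    by (simp add: mu_val_eq_frob_sq F_def)
  with \<open>Im V = 0\<close> show ?thesis
    unfolding V_def[symmetric] by (simp add: less_eq_complex_def)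
qed

end

theorem lemma9p2:
  shows "(\<forall>(d::nat) (T::nat) \<rho> \<sigma>. T \<ge> 1 \<and> (\<forall>t<T. density_mat d (\<rho> t) \<and> density_mat d (\<sigma> t)) \<longrightarrow>
            cmod (expect d (2*T) (joint_state T \<rho> \<sigma>) (Z_op T) - mu_val d T \<rho> \<sigma>) \<le> 2 / real T)
       \<and> (\<exists>K::real. \<forall>(d::nat) (T::nat) \<rho> \<sigma>. T \<ge> 1 \<and> (\<forall>t<T. density_mat d (\<rho> t) \<and> density_mat d (\<sigma> t)) \<longrightarrow>
            variance_op d (2*T) (joint_state T \<rho> \<sigma>) (Z_op T)
              \<le> complex_of_real (16 / real T * Re (mu_val d T \<rho> \<sigma>) + K / (real T)^2))"
proof (intro conjI exI[of _ 80] allI impI)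
  fix d T :: nat and \<rho> \<sigma> :: "nat \<Rightarrow> complex mat"
  assume "T \<ge> 1 \<and> (\<forall>t<T. density_mat d (\<rho> t) \<and> density_mat d (\<sigma> t))"
  then interpret swap_estimator d T \<rho> \<sigma> by unfold_locales auto
  show "cmod (expect d (2*T) (joint_state T \<rho> \<sigma>) (Z_op T) - mu_val d T \<rho> \<sigma>) \<le> 2 / real T"
    by (rule norm_expect_Z_op_bias_le)
next
  fix d T :: nat and \<rho> \<sigma> :: "nat \<Rightarrow> complex mat"
  assume "T \<ge> 1 \<and> (\<forall>t<T. density_mat d (\<rho> t) \<and> density_mat d (\<sigma> t))"
  then interpret swap_estimator d T \<rho> \<sigma> by unfold_locales auto
  show "variance_op d (2*T) (joint_state T \<rho> \<sigma>) (Z_op T)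
      \<le> complex_of_real (16 / real T * Re (mu_val d T \<rho> \<sigma>) + 80 / (real T)^2)"
    by (rule variance_Z_op_le)
qed

end
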